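(* Let $K$ be a field of characteristic $0$, $\eta\in K\setminus\{0\}$ not a root of unity, $A=A_\eta=A(1+\eta,-\eta,1)$, $\epsilon=(\eta-1)^{-1}$ and $w=-ud+du+\epsilon$. Let $N=A/A(d-1)$ and for $a\in A$ write $\bar a$ for its image in $N$. Then every nonzero submodule $U$ of $N$ contains $\overline{w^m}$ for some integer $m\ge0$.
   Context: The down-up algebra $A(\alpha,\beta,\gamma)$ is the $K$-algebra generated by $d,u$ with relations $d^2u=\alpha dud+\beta ud^2+\gamma d$ and $du^2=\alpha udu+\beta u^2d+\gamma u$. In $A_\eta$, $w$ is normal with $dw=\eta wd$, $uw=\eta^{-1}wu$. *)

theory Defs
  imports Main "HOL-Library.Poly_Mapping"
begin

datatype letter = LD | LU

typedef word = "UNIV :: letter list set" by simp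

setup_lifting type_definition_word

instantiation word :: monoid_add
begin
lift_definition zero_word :: word is "[]" .
lift_definition plus_word :: "word \<Rightarrow> word \<Rightarrow> word" is "(@)" .
instance by standard (transfer, simp)+
end

text \<open>The free associative K-algebra on two generators; multiplication is
 concatenation of words (convolution).\<close>
type_synonym 'k free2 = "word \<Rightarrow>\<^sub>0 'k"

definition scal :: "'k::ring_1 \<Rightarrow> 'k free2" where
  "scal c = Poly_Mapping.single 0 c"

definition gen_d :: "'k::ring_1 free2" where
  "gen_d = Poly_Mapping.single (Abs_word [LD]) 1"

definition gen_u :: "'k::ring_1 free2" where
  "gen_u = Poly_Mapping.single (Abs_word [LU]) 1"

definition two_sided_ideal :: "'a::ring_1 set \<Rightarrow> bool" where
  "two_sided_ideal I \<longleftrightarrow> 0 \<in> I \<and> (\<forall>x\<in>I. \<forall>y\<in>I. x + y \<in> I)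
     \<and> (\<forall>x\<in>I. \<forall>a b. a * x * b \<in> I)"

definition left_ideal :: "'a::ring_1 set \<Rightarrow> bool" where
  "left_ideal L \<longleftrightarrow> 0 \<in> L \<and> (\<forall>x\<in>L. \<forall>y\<in>L. x + y \<in> L) \<and> (\<forall>x\<in>L. \<forall>a. a * x \<in> L)"

definition downup_rels :: "'k::ring_1 \<Rightarrow> 'k \<Rightarrow> 'k \<Rightarrow> 'k free2 set" where
  "downup_rels \<alpha> \<beta> \<gamma> =
    {gen_d * gen_d * gen_u - scal \<alpha> * (gen_d * gen_u * gen_d)
       - scal \<beta> * (gen_u * gen_d * gen_d) - scal \<gamma> * gen_d,
     gen_d * gen_u * gen_u - scal \<alpha> * (gen_u * gen_d * gen_u)
       - scal \<beta> * (gen_u * gen_u * gen_d) - scal \<gamma> * gen_u}"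

definition downup_ideal :: "'k::ring_1 \<Rightarrow> 'k \<Rightarrow> 'k \<Rightarrow> 'k free2 set" where
  "downup_ideal \<alpha> \<beta> \<gamma> = \<Inter>{I. two_sided_ideal I \<and> downup_rels \<alpha> \<beta> \<gamma> \<subseteq> I}"

text \<open>Preimage in the free algebra of the left ideal A(d-1) of A:
  the kernel of the map free algebra -> N = A / A(d-1).\<close>
definition N_kernel :: "'k::ring_1 \<Rightarrow> 'k \<Rightarrow> 'k \<Rightarrow> 'k free2 set" where
  "N_kernel \<alpha> \<beta> \<gamma> = {i + a * (gen_d - 1) | i a. i \<in> downup_ideal \<alpha> \<beta> \<gamma>}"

end

theory Submission imports Defs begin

(*
  Put eps = 1/(eta-1), w = -ud + du + eps and let NK be the kernel of the
  map from the free algebra onto N = A/A(d-1).  The defining relations of A make w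
  eta-normal: dw = eta wd and wu = eta uw, and they give d u^i = u^i d + u^(i-1)(a_i w - b_i)
  with a_i = eps(eta^i - 1), b_i = eps i.  Since d acts trivially on N, every element of
  the free algebra is congruent modulo NK to a finite combination  sum c_ij u^i w^j, and
  left multiplication by d acts on the coefficient array c by an explicit operator.

  A submodule U of N is a left ideal L of the free algebra containing NK; if U is
  nonzero, pick f in L \ NK, write f as such a combination and look at its top nonzero row I.
  Multiplying by d - eta^k removes the entry in column k of the top row and rescales
  the other entries by eta^j - eta^k, which is nonzero because eta is not a root of unity;
  so the top row can be reduced to a single entry.  One more such step clears that row
  and leaves the nonzero entry -b_I c_Ij in row I-1 (here char K = 0 is used).  By
  descent the array becomes a single multiple of w^m, so w^m lies in L.
*)

section \<open>Scalars and ideals of the free algebra\<close>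

lemma scal_add: "scal (a + b) = scal a + (scal b :: 'k::ring_1 free2)"
  by (simp add: scal_def single_add)

lemma scal_diff: "scal (a - b) = scal a - (scal b :: 'k::ring_1 free2)"
  by (simp add: scal_def single_diff)

lemma scal_minus: "scal (- a) = - (scal a :: 'k::ring_1 free2)"
  by (simp add: scal_def single_uminus)

lemma scal_1 [simp]: "scal 1 = (1 :: 'k::ring_1 free2)"
  by (simp add: scal_def)

lemma scal_0 [simp]: "scal 0 = (0 :: 'k::ring_1 free2)"
  by (simp add: scal_def)

lemma scal_mult: "scal a * scal b = (scal (a * b) :: 'k::ring_1 free2)"
  by (simp add: scal_def mult_single)

lemma scal_mult_assoc: "scal a * (scal b * x) = (scal (a * b) * x :: 'k::ring_1 free2)"
  by (metis mult.assoc scal_mult)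

text \<open>Adding a fresh monomial to a polynomial mapping; this is the step of the
  induction principle \<open>update_induct\<close> used to argue monomial by monomial.\<close>
lemma update_eq_add:
  "a \<notin> Poly_Mapping.keys f \<Longrightarrow> Poly_Mapping.update a b f = f + Poly_Mapping.single a b"
  by (rule poly_mapping_eqI) (auto simp: lookup_update lookup_add lookup_single in_keys_iff when_def)

lemma scal_central: "x * scal c = scal c * (x :: 'k::comm_ring_1 free2)"
proof (induction x rule: update_induct)
  case const
  then show ?case by simp
next
  case (update f a b)
  have "Poly_Mapping.single a b * scal c = scal c * Poly_Mapping.single a b"
    by (simp add: scal_def mult_single mult.commute)
  then show ?case using update by (simp add: update_eq_add distrib_left distrib_right)
qed

lemma scal_central_left: "x * (scal c * y) = scal c * (x * (y :: 'k::comm_ring_1 free2))"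
  by (metis mult.assoc scal_central)

lemmas scal_simps = scal_add scal_diff scal_minus scal_mult scal_mult_assoc

lemma single_word_Cons:
  "Poly_Mapping.single (Abs_word (a # l)) k
     = Poly_Mapping.single (Abs_word [a]) 1 * Poly_Mapping.single (Abs_word l) (k::'k::ring_1)"
proof -
  have "Abs_word [a] + Abs_word l = Abs_word (a # l)"
    by (simp add: plus_word_def Abs_word_inverse)
  then show ?thesis by (simp add: mult_single)
qed

lemma single_word_Nil: "Poly_Mapping.single (Abs_word []) k = (scal k :: 'k::ring_1 free2)"
  by (simp add: scal_def zero_word_def)

lemma tsi_mult: "two_sided_ideal I \<Longrightarrow> x \<in> I \<Longrightarrow> a * x * b \<in> I"
  unfolding two_sided_ideal_def by blast

lemma tsi_lmult: "two_sided_ideal I \<Longrightarrow> x \<in> I \<Longrightarrow> a * x \<in> I"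
  using tsi_mult[of I x a 1] by simp

lemma tsi_rmult: "two_sided_ideal I \<Longrightarrow> x \<in> I \<Longrightarrow> x * b \<in> I"
  using tsi_mult[of I x 1 b] by simp

lemma tsi_add: "two_sided_ideal I \<Longrightarrow> x \<in> I \<Longrightarrow> y \<in> I \<Longrightarrow> x + y \<in> I"
  unfolding two_sided_ideal_def by blast

lemma tsi_0: "two_sided_ideal I \<Longrightarrow> 0 \<in> I"
  unfolding two_sided_ideal_def by blast

lemma li_add: "left_ideal I \<Longrightarrow> x \<in> I \<Longrightarrow> y \<in> I \<Longrightarrow> x + y \<in> I"
  unfolding left_ideal_def by blast

lemma li_lmult: "left_ideal I \<Longrightarrow> x \<in> I \<Longrightarrow> a * x \<in> I"
  unfolding left_ideal_def by blast

lemma li_0: "left_ideal I \<Longrightarrow> 0 \<in> I"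
  unfolding left_ideal_def by blast

lemma li_diff: "left_ideal I \<Longrightarrow> x \<in> I \<Longrightarrow> y \<in> I \<Longrightarrow> x - y \<in> I"
  using li_add[of I x "-y"] li_lmult[of I y "-1"] by simp

lemma li_sum: "left_ideal I \<Longrightarrow> (\<And>x. x \<in> S \<Longrightarrow> f x \<in> I) \<Longrightarrow> sum f S \<in> I"
  by (induction S rule: infinite_finite_induct) (simp_all add: li_0 li_add)

text \<open>Membership in a left ideal is preserved under congruence modulo a smaller left ideal:
  the form in which the hypothesis \<open>NK \<subseteq> L\<close> on the submodule is used.\<close>
lemma li_congruent:
  assumes "left_ideal L" "K \<subseteq> L" "x \<in> L" "x - y \<in> K"
  shows "y \<in> L"
  using li_diff[OF assms(1) assms(3) subsetD[OF assms(2,4)]] by simp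

text \<open>This makes \<open>w\<close> a normal element.\<close>
lemma skew_commute_power:
  fixes x y :: "'k::comm_ring_1 free2"
  assumes J: "two_sided_ideal J" and xy: "x * y - scal c * (y * x) \<in> J"
  shows "x * y ^ j - scal (c ^ j) * (y ^ j * x) \<in> J"
proof (induction j)
  case 0
  then show ?case using tsi_0[OF J] by simp
next
  case (Suc j)
  have "scal (c ^ j) * (y ^ j * (scal c * (y * x))) = scal (c ^ Suc j) * (y ^ Suc j * x)"
    by (subst scal_central_left) (simp add: scal_mult_assoc power_Suc2 mult.assoc mult.commute del: power_Suc)
  then have "x * y ^ Suc j - scal (c ^ Suc j) * (y ^ Suc j * x) =
      (x * y ^ j - scal (c ^ j) * (y ^ j * x)) * y + scal (c ^ j) * (y ^ j * (x * y - scal c * (y * x)))"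
    by (simp add: algebra_simps power_Suc2 del: power_Suc)
  then show ?case using Suc xy tsi_add[OF J] tsi_lmult[OF J] tsi_rmult[OF J] by metis
qed

section \<open>The down-up algebra and the module N\<close>

lemma downup_ideal_two_sided: "two_sided_ideal (downup_ideal \<alpha> \<beta> \<gamma>)"
  unfolding two_sided_ideal_def downup_ideal_def by auto

lemma downup_rels_in_ideal: "downup_rels \<alpha> \<beta> \<gamma> \<subseteq> downup_ideal \<alpha> \<beta> \<gamma>"
  unfolding downup_ideal_def by auto

lemma N_kernel_left_ideal: "left_ideal (N_kernel \<alpha> \<beta> \<gamma>)"
  unfolding left_ideal_def
proof (intro conjI ballI allI)
  let ?J = "downup_ideal \<alpha> \<beta> \<gamma>"
  have J: "two_sided_ideal ?J" by (rule downup_ideal_two_sided)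
  show "0 \<in> N_kernel \<alpha> \<beta> \<gamma>"
    unfolding N_kernel_def using tsi_0[OF J]
    by (metis (mono_tags, lifting) add.right_neutral mem_Collect_eq mult_zero_left)
  fix x assume "x \<in> N_kernel \<alpha> \<beta> \<gamma>"
  then obtain i a where x: "x = i + a * (gen_d - 1)" "i \<in> ?J"
    unfolding N_kernel_def by blast
  {
    fix y assume "y \<in> N_kernel \<alpha> \<beta> \<gamma>"
    then obtain i' a' where y: "y = i' + a' * (gen_d - 1)" "i' \<in> ?J"
      unfolding N_kernel_def by blast
    have "x + y = (i + i') + (a + a') * (gen_d - 1)"
      unfolding x y by (simp add: algebra_simps)
    then show "x + y \<in> N_kernel \<alpha> \<beta> \<gamma>"
      unfolding N_kernel_def using tsi_add[OF J x(2) y(2)] by blast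
  }
  fix b
  have "b * x = b * i + (b * a) * (gen_d - 1)"
    unfolding x by (simp add: algebra_simps)
  then show "b * x \<in> N_kernel \<alpha> \<beta> \<gamma>"
    unfolding N_kernel_def using tsi_lmult[OF J x(2)] by blast
qed

lemma downup_ideal_in_N_kernel: "x \<in> downup_ideal \<alpha> \<beta> \<gamma> \<Longrightarrow> x \<in> N_kernel \<alpha> \<beta> \<gamma>"
  unfolding N_kernel_def
  by (metis (mono_tags, lifting) add.right_neutral mem_Collect_eq mult_zero_left)

lemma right_d_in_N_kernel: "x * gen_d - x \<in> N_kernel \<alpha> \<beta> \<gamma>"
  unfolding N_kernel_def using tsi_0[OF downup_ideal_two_sided]
  by (intro CollectI exI[of _ 0] exI[of _ x]) (auto simp: algebra_simps)

section \<open>Finite combinations \<open>\<Sum> c\<^sub>i\<^sub>j u\<^sup>i y\<^sup>j\<close>\<close>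

type_synonym 'k coeffs = "nat \<Rightarrow> nat \<Rightarrow> 'k"

definition bounded_by :: "nat \<Rightarrow> 'k::zero coeffs \<Rightarrow> bool" where
  "bounded_by n c \<longleftrightarrow> (\<forall>i j. n \<le> i \<or> n \<le> j \<longrightarrow> c i j = 0)"

definition uw_sum :: "'k::comm_ring_1 free2 \<Rightarrow> nat \<Rightarrow> 'k coeffs \<Rightarrow> 'k free2" where
  "uw_sum y n c = (\<Sum>i<n. \<Sum>j<n. scal (c i j) * (gen_u ^ i * y ^ j))"

lemma bounded_by_mono: "bounded_by n c \<Longrightarrow> n \<le> m \<Longrightarrow> bounded_by m c"
  unfolding bounded_by_def by auto

lemma bounded_by_row_finite: "bounded_by n c \<Longrightarrow> finite {j. c i j \<noteq> 0}"
  by (rule finite_subset[of _ "{..<n}"]) (auto simp: bounded_by_def not_le[symmetric])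

lemma uw_sum_enlarge:
  assumes "bounded_by n c" "n \<le> m"
  shows "uw_sum y m c = uw_sum y n c"
proof -
  have vanish: "c i j = 0" if "n \<le> i \<or> n \<le> j" for i j
    using assms(1) that unfolding bounded_by_def by blast
  have "uw_sum y m c = (\<Sum>i<n. \<Sum>j<m. scal (c i j) * (gen_u ^ i * y ^ j))"
    unfolding uw_sum_def by (rule sum.mono_neutral_right) (use assms(2) vanish in auto)
  also have "\<dots> = uw_sum y n c"
    unfolding uw_sum_def
    by (rule sum.cong[OF refl], rule sum.mono_neutral_right) (use assms(2) vanish in auto)
  finally show ?thesis .
qed

lemma uw_sum_add: "uw_sum y n (\<lambda>i j. c i j + e i j) = uw_sum y n c + uw_sum y n e"
  unfolding uw_sum_def by (simp add: scal_add distrib_right sum.distrib)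

lemma uw_sum_diff: "uw_sum y n (\<lambda>i j. c i j - e i j) = uw_sum y n c - uw_sum y n e"
  unfolding uw_sum_def by (simp add: scal_diff left_diff_distrib sum_subtractf)

lemma uw_sum_scal: "uw_sum y n (\<lambda>i j. k * c i j) = scal k * uw_sum y n c"
  unfolding uw_sum_def by (simp add: sum_distrib_left scal_mult[symmetric] mult.assoc)

lemma u_times_uw_sum:
  assumes "bounded_by n c"
  shows "gen_u * uw_sum y n c = uw_sum y (Suc n) (\<lambda>i j. if i = 0 then 0 else c (i - 1) j)"
proof -
  have vanish: "c i j = 0" if "n \<le> i \<or> n \<le> j" for i j
    using assms that unfolding bounded_by_def by blast
  have "uw_sum y (Suc n) (\<lambda>i j. if i = 0 then 0 else c (i - 1) j)
      = (\<Sum>i<n. \<Sum>j<Suc n. scal (c i j) * (gen_u ^ Suc i * y ^ j))"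
    unfolding uw_sum_def by (simp add: sum.lessThan_Suc_shift del: sum.lessThan_Suc)
  also have "\<dots> = (\<Sum>i<n. \<Sum>j<n. scal (c i j) * (gen_u ^ Suc i * y ^ j))"
    using vanish by simp
  also have "\<dots> = gen_u * uw_sum y n c"
    unfolding uw_sum_def by (simp add: sum_distrib_left scal_central_left mult.assoc)
  finally show ?thesis by simp
qed

text \<open>Two reindexings used when computing the action of \<open>d\<close>: terms \<open>u\<^sup>i\<^sup>-\<^sup>1 y\<^sup>j\<^sup>+\<^sup>1\<close> and
  \<open>u\<^sup>i\<^sup>-\<^sup>1 y\<^sup>j\<close> produced from row \<open>i\<close> are collected as entries of row \<open>i - 1\<close>.  Row \<open>0\<close>
  contributes nothing because its weight \<open>a 0\<close> resp. \<open>b 0\<close> vanishes.\<close>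
lemma reindex_raised_terms:
  assumes "bounded_by n c" "a 0 = 0"
  shows "(\<Sum>i<Suc n. \<Sum>j<Suc n. scal (if j = 0 then 0 else a (Suc i) * c (Suc i) (j - 1))
              * (gen_u ^ i * y ^ j))
       = (\<Sum>i<n. \<Sum>j<n. scal (a i * c i j) * (gen_u ^ (i - 1) * y ^ Suc j))"
proof -
  define g where "g i = (\<Sum>j<n. scal (a i * c i j) * (gen_u ^ (i - 1) * y ^ Suc j))" for i
  have vanish: "c i j = 0" if "n \<le> i" for i j
    using assms(1) that unfolding bounded_by_def by blast
  have "(\<Sum>i<Suc n. \<Sum>j<Suc n. scal (if j = 0 then 0 else a (Suc i) * c (Suc i) (j - 1))
              * (gen_u ^ i * y ^ j))
      = (\<Sum>i<Suc n. g (Suc i))"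
    unfolding g_def
    by (rule sum.cong[OF refl]) (simp add: sum.lessThan_Suc_shift del: sum.lessThan_Suc)
  also have "\<dots> = (\<Sum>i<Suc (Suc n). g i) - g 0"
    by (simp add: sum.lessThan_Suc_shift del: sum.lessThan_Suc)
  also have "g 0 = 0"
    unfolding g_def using assms(2) by simp
  also have "(\<Sum>i<Suc (Suc n). g i) = (\<Sum>i<n. g i)"
    using vanish by (simp add: g_def)
  finally show ?thesis by (simp add: g_def)
qed

lemma reindex_lowered_terms:
  assumes "bounded_by n c" "b 0 = 0"
  shows "(\<Sum>i<Suc n. \<Sum>j<Suc n. scal (b (Suc i) * c (Suc i) j) * (gen_u ^ i * y ^ j))
       = (\<Sum>i<n. \<Sum>j<n. scal (b i * c i j) * (gen_u ^ (i - 1) * y ^ j))"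
proof -
  define g where "g i = (\<Sum>j<n. scal (b i * c i j) * (gen_u ^ (i - 1) * y ^ j))" for i
  have vanish: "c i j = 0" if "n \<le> i \<or> n \<le> j" for i j
    using assms(1) that unfolding bounded_by_def by blast
  have "(\<Sum>i<Suc n. \<Sum>j<Suc n. scal (b (Suc i) * c (Suc i) j) * (gen_u ^ i * y ^ j))
      = (\<Sum>i<Suc n. g (Suc i))"
    unfolding g_def by (rule sum.cong[OF refl]) (use vanish in simp)
  also have "\<dots> = (\<Sum>i<Suc (Suc n). g i) - g 0"
    by (simp add: sum.lessThan_Suc_shift del: sum.lessThan_Suc)
  also have "g 0 = 0"
    unfolding g_def using assms(2) by simp
  also have "(\<Sum>i<Suc (Suc n). g i) = (\<Sum>i<n. g i)"
    using vanish by (simp add: g_def)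
  finally show ?thesis by (simp add: g_def)
qed

section \<open>The normal element \<open>w\<close> and the action of \<open>d\<close> on \<open>N\<close>\<close>

text \<open>For \<open>A\<^sub>\<eta> = A(1+\<eta>, -\<eta>, 1)\<close> and \<open>\<epsilon> = (\<eta>-1)\<^sup>-\<^sup>1\<close>: the element \<open>w = -ud + du + \<epsilon>\<close> and the
  coefficients \<open>a\<^sub>i = \<epsilon>(\<eta>\<^sup>i - 1)\<close>, \<open>b\<^sub>i = \<epsilon> i\<close> of the rule \<open>d u\<^sup>i = u\<^sup>i d + u\<^sup>i\<^sup>-\<^sup>1 (a\<^sub>i w - b\<^sub>i)\<close>.\<close>
definition w_elem :: "'k::field \<Rightarrow> 'k free2" where
  "w_elem \<eta> = - (gen_u * gen_d) + gen_d * gen_u + scal (inverse (\<eta> - 1))"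

definition acoef :: "'k::field \<Rightarrow> nat \<Rightarrow> 'k" where
  "acoef \<eta> i = inverse (\<eta> - 1) * (\<eta> ^ i - 1)"

definition bcoef :: "'k::field \<Rightarrow> nat \<Rightarrow> 'k" where
  "bcoef \<eta> i = inverse (\<eta> - 1) * of_nat i"

text \<open>The coefficient array of \<open>d \<cdot> \<Sum> c\<^sub>i\<^sub>j u\<^sup>i w\<^sup>j\<close> in \<open>N\<close>: \<open>d\<close> scales \<open>u\<^sup>i w\<^sup>j\<close> by \<open>\<eta>\<^sup>j\<close> and
  feeds row \<open>i+1\<close> into row \<open>i\<close>.\<close>
definition d_action :: "'k::field \<Rightarrow> 'k coeffs \<Rightarrow> 'k coeffs" where
  "d_action \<eta> c i j = \<eta> ^ j * c i j
     + (if j = 0 then 0 else acoef \<eta> (Suc i) * c (Suc i) (j - 1))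
     - bcoef \<eta> (Suc i) * c (Suc i) j"

lemma d_action_bounded: "bounded_by n c \<Longrightarrow> bounded_by (Suc n) (d_action \<eta> c)"
  unfolding bounded_by_def d_action_def by auto

text \<open>The array of \<open>(d - \<eta>\<^sup>k) \<cdot> \<Sum> c\<^sub>i\<^sub>j u\<^sup>i w\<^sup>j\<close>: the elimination step of the proof.\<close>
definition shifted_d_action :: "'k::field \<Rightarrow> nat \<Rightarrow> 'k coeffs \<Rightarrow> 'k coeffs" where
  "shifted_d_action \<eta> k c i j = d_action \<eta> c i j - \<eta> ^ k * c i j"

definition rows_vanish_above :: "nat \<Rightarrow> 'k::zero coeffs \<Rightarrow> bool" where
  "rows_vanish_above I c \<longleftrightarrow> (\<forall>i>I. \<forall>j. c i j = 0)"

lemma shifted_d_action_bounded: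
  assumes "bounded_by n c"
  shows "bounded_by (Suc n) (shifted_d_action \<eta> k c)"
  using d_action_bounded[OF assms] bounded_by_mono[OF assms, of "Suc n"]
  unfolding bounded_by_def shifted_d_action_def by simp

lemma shifted_d_action_rows_vanish:
  "rows_vanish_above I c \<Longrightarrow> rows_vanish_above I (shifted_d_action \<eta> k c)"
  unfolding rows_vanish_above_def shifted_d_action_def d_action_def by auto

text \<open>On the top row the elimination step multiplies column \<open>j\<close> by \<open>\<eta>\<^sup>j - \<eta>\<^sup>k\<close>, so it
  kills column \<open>k\<close> and (for \<open>\<eta>\<close> not a root of unity) keeps every other column.\<close>
lemma shifted_d_action_top_row:
  "rows_vanish_above I c \<Longrightarrow> shifted_d_action \<eta> k c I j = (\<eta> ^ j - \<eta> ^ k) * c I j"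
  unfolding rows_vanish_above_def shifted_d_action_def d_action_def by (simp add: algebra_simps)

lemma shifted_d_action_below_top:
  assumes "rows_vanish_above (Suc I) c" "\<forall>j. c (Suc I) j \<noteq> 0 \<longrightarrow> j = k"
  shows "shifted_d_action \<eta> k c I k = - bcoef \<eta> (Suc I) * c (Suc I) k"
proof -
  have "k \<noteq> 0 \<Longrightarrow> c (Suc I) (k - 1) = 0"
    using assms(2) by (metis diff_less less_not_refl not_gr0 zero_less_one)
  then show ?thesis
    using assms(1) unfolding rows_vanish_above_def shifted_d_action_def d_action_def by auto
qed

text \<open>The class of \<open>\<Sum> c\<^sub>i\<^sub>j u\<^sup>i w\<^sup>j\<close> generates a submodule of \<open>N\<close> containing some \<open>w\<^sup>m\<close>.\<close>
definition reaches_w_power :: "'k::field \<Rightarrow> nat \<Rightarrow> 'k coeffs \<Rightarrow> bool" where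
  "reaches_w_power \<eta> n c \<longleftrightarrow>
     (\<exists>a m. a * uw_sum (w_elem \<eta>) n c - w_elem \<eta> ^ m \<in> N_kernel (1 + \<eta>) (- \<eta>) 1)"

context
  fixes \<eta> :: "'k::field"
  assumes eta_ne1: "\<eta> \<noteq> 1"
begin

abbreviation "J \<equiv> downup_ideal (1 + \<eta>) (- \<eta>) (1::'k)"
abbreviation "NK \<equiv> N_kernel (1 + \<eta>) (- \<eta>) (1::'k)"
abbreviation "w \<equiv> w_elem \<eta>"

text \<open>Instances of the centrality of scalars that are safe as rewrite rules.\<close>
lemmas scal_commute_gens =
  scal_central[where x = gen_d] scal_central_left[where x = gen_d]
  scal_central[where x = gen_u] scal_central_left[where x = gen_u]
  scal_central[where x = w] scal_central_left[where x = w]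
  scal_central[where x = "w ^ j" for j] scal_central_left[where x = "w ^ j" for j]
  scal_central[where x = "gen_u ^ j" for j] scal_central_left[where x = "gen_u ^ j" for j]

lemma J_two_sided: "two_sided_ideal J"
  by (rule downup_ideal_two_sided)

lemma NK_left_ideal: "left_ideal NK"
  by (rule N_kernel_left_ideal)

lemma eta_eps: "\<eta> * inverse (\<eta> - 1) = 1 + inverse (\<eta> - 1)"
  using eta_ne1 by (simp add: field_simps)

lemma d_w_commute: "gen_d * w - scal \<eta> * (w * gen_d) \<in> J"
proof -
  have eq: "gen_d * w - scal \<eta> * (w * gen_d) =
      gen_d * gen_d * gen_u - scal (1 + \<eta>) * (gen_d * gen_u * gen_d)
        - scal (- \<eta>) * (gen_u * gen_d * gen_d) - scal 1 * gen_d"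
    by (simp add: w_elem_def algebra_simps scal_simps scal_commute_gens eta_eps)
  show ?thesis
    using downup_rels_in_ideal[of "1 + \<eta>" "- \<eta>" "1::'k"] unfolding eq downup_rels_def by blast
qed

lemma w_u_commute: "w * gen_u - scal \<eta> * (gen_u * w) \<in> J"
proof -
  have eq: "w * gen_u - scal \<eta> * (gen_u * w) =
      gen_d * gen_u * gen_u - scal (1 + \<eta>) * (gen_u * gen_d * gen_u)
        - scal (- \<eta>) * (gen_u * gen_u * gen_d) - scal 1 * gen_u"
    by (simp add: w_elem_def algebra_simps scal_simps scal_commute_gens eta_eps)
  show ?thesis
    using downup_rels_in_ideal[of "1 + \<eta>" "- \<eta>" "1::'k"] unfolding eq downup_rels_def by blast
qed

text \<open>The commutation rule \<open>d u\<^sup>i = u\<^sup>i d + u\<^sup>i\<^sup>-\<^sup>1 (a\<^sub>i w - b\<^sub>i)\<close>, by induction on \<open>i \<ge> 1\<close>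
  using \<open>a\<^sub>i\<^sub>+\<^sub>1 = a\<^sub>i + \<eta>\<^sup>i\<close> and \<open>b\<^sub>i\<^sub>+\<^sub>1 = b\<^sub>i + \<epsilon>\<close>.\<close>
lemma d_u_power_Suc:
  "gen_d * gen_u ^ Suc i - (gen_u ^ Suc i * gen_d
     + gen_u ^ i * (scal (acoef \<eta> (Suc i)) * w - scal (bcoef \<eta> (Suc i)))) \<in> J"
proof (induction i)
  case 0
  have "acoef \<eta> 1 = 1" "bcoef \<eta> 1 = inverse (\<eta> - 1)"
    using eta_ne1 by (auto simp: acoef_def bcoef_def)
  then show ?case using tsi_0[OF J_two_sided] by (simp add: w_elem_def)
next
  case (Suc i)
  have a_step: "scal (acoef \<eta> (Suc (Suc i))) = scal (acoef \<eta> (Suc i)) + (scal (\<eta> ^ Suc i) :: 'k free2)"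
    unfolding scal_add[symmetric] acoef_def using eta_ne1 by (simp add: field_simps)
  have b_step: "scal (bcoef \<eta> (Suc (Suc i))) = scal (bcoef \<eta> (Suc i)) + (scal (inverse (\<eta> - 1)) :: 'k free2)"
    unfolding scal_add[symmetric] bcoef_def using eta_ne1 by (simp add: field_simps)
  have "gen_d * gen_u ^ Suc (Suc i) - (gen_u ^ Suc (Suc i) * gen_d
        + gen_u ^ Suc i * (scal (acoef \<eta> (Suc (Suc i))) * w - scal (bcoef \<eta> (Suc (Suc i)))))
     = gen_u * (gen_d * gen_u ^ Suc i - (gen_u ^ Suc i * gen_d
        + gen_u ^ i * (scal (acoef \<eta> (Suc i)) * w - scal (bcoef \<eta> (Suc i)))))
       + (w * gen_u ^ Suc i - scal (\<eta> ^ Suc i) * (gen_u ^ Suc i * w))"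
    unfolding a_step b_step
    by (simp add: w_elem_def algebra_simps scal_simps scal_commute_gens del: power_Suc) (simp add: algebra_simps scal_simps scal_commute_gens)
  moreover have "w * gen_u ^ Suc i - scal (\<eta> ^ Suc i) * (gen_u ^ Suc i * w) \<in> J"
    by (rule skew_commute_power[OF J_two_sided w_u_commute])
  ultimately show ?case using Suc tsi_add[OF J_two_sided] tsi_lmult[OF J_two_sided] by metis
qed

lemma d_u_power:
  "gen_d * gen_u ^ i - (gen_u ^ i * gen_d
     + gen_u ^ (i - 1) * (scal (acoef \<eta> i) * w - scal (bcoef \<eta> i))) \<in> J"
proof (cases i)
  case 0
  then show ?thesis using tsi_0[OF J_two_sided] by (simp add: acoef_def bcoef_def)
next
  case (Suc k)
  then show ?thesis using d_u_power_Suc[of k] by simp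
qed

text \<open>Action of \<open>d\<close> on a monomial in \<open>N\<close>; the trailing \<open>d\<close> is absorbed because \<open>d\<close> acts
  trivially on the generator of \<open>N\<close>.\<close>
lemma d_times_monomial:
  "gen_d * (gen_u ^ i * w ^ j) - (scal (\<eta> ^ j) * (gen_u ^ i * w ^ j)
     + scal (acoef \<eta> i) * (gen_u ^ (i - 1) * w ^ Suc j)
     - scal (bcoef \<eta> i) * (gen_u ^ (i - 1) * w ^ j)) \<in> NK"
proof -
  let ?du = "gen_d * gen_u ^ i - (gen_u ^ i * gen_d
     + gen_u ^ (i - 1) * (scal (acoef \<eta> i) * w - scal (bcoef \<eta> i)))"
  let ?dw = "gen_d * w ^ j - scal (\<eta> ^ j) * (w ^ j * gen_d)"
  have "gen_d * (gen_u ^ i * w ^ j) - (scal (\<eta> ^ j) * (gen_u ^ i * w ^ j)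
     + scal (acoef \<eta> i) * (gen_u ^ (i - 1) * w ^ Suc j)
     - scal (bcoef \<eta> i) * (gen_u ^ (i - 1) * w ^ j))
     = ?du * w ^ j + gen_u ^ i * ?dw
       + scal (\<eta> ^ j) * ((gen_u ^ i * w ^ j) * gen_d - gen_u ^ i * w ^ j)"
    by (simp add: algebra_simps scal_simps scal_commute_gens del: power_Suc) (simp add: mult.assoc power_commutes)
  moreover have "?du * w ^ j \<in> NK"
    by (rule downup_ideal_in_N_kernel, rule tsi_rmult[OF J_two_sided d_u_power])
  moreover have "gen_u ^ i * ?dw \<in> NK"
    by (rule downup_ideal_in_N_kernel, rule tsi_lmult[OF J_two_sided],
        rule skew_commute_power[OF J_two_sided d_w_commute])
  moreover have "scal (\<eta> ^ j) * ((gen_u ^ i * w ^ j) * gen_d - gen_u ^ i * w ^ j) \<in> NK"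
    by (rule li_lmult[OF NK_left_ideal right_d_in_N_kernel])
  ultimately show ?thesis using li_add[OF NK_left_ideal] by metis
qed

lemma d_times_uw_sum:
  assumes "bounded_by n c"
  shows "gen_d * uw_sum w n c - uw_sum w (Suc n) (d_action \<eta> c) \<in> NK"
proof -
  define T where "T i j = scal (\<eta> ^ j) * (gen_u ^ i * w ^ j)
     + scal (acoef \<eta> i) * (gen_u ^ (i - 1) * w ^ Suc j)
     - scal (bcoef \<eta> i) * (gen_u ^ (i - 1) * w ^ j)" for i j
  have "gen_d * uw_sum w n c - (\<Sum>i<n. \<Sum>j<n. scal (c i j) * T i j)
     = (\<Sum>i<n. \<Sum>j<n. scal (c i j) * (gen_d * (gen_u ^ i * w ^ j) - T i j))"
    unfolding uw_sum_def
    by (simp add: sum_distrib_left sum_subtractf right_diff_distrib scal_commute_gens mult.assoc)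
  also have "\<dots> \<in> NK"
    by (intro li_sum[OF NK_left_ideal] li_lmult[OF NK_left_ideal])
      (use d_times_monomial in \<open>simp add: T_def\<close>)
  finally have congruent: "gen_d * uw_sum w n c - (\<Sum>i<n. \<Sum>j<n. scal (c i j) * T i j) \<in> NK" .
  have T_expanded: "(\<Sum>i<n. \<Sum>j<n. scal (c i j) * T i j) =
     uw_sum w n (\<lambda>i j. \<eta> ^ j * c i j)
     + (\<Sum>i<n. \<Sum>j<n. scal (acoef \<eta> i * c i j) * (gen_u ^ (i - 1) * w ^ Suc j))
     - (\<Sum>i<n. \<Sum>j<n. scal (bcoef \<eta> i * c i j) * (gen_u ^ (i - 1) * w ^ j))"
    unfolding uw_sum_def T_def
    by (simp add: distrib_left right_diff_distrib sum.distrib sum_subtractf scal_mult_assoc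
        mult.commute del: power_Suc)
  have action_split: "uw_sum w (Suc n) (d_action \<eta> c) = uw_sum w (Suc n) (\<lambda>i j. \<eta> ^ j * c i j)
     + uw_sum w (Suc n) (\<lambda>i j. if j = 0 then 0 else acoef \<eta> (Suc i) * c (Suc i) (j - 1))
     - uw_sum w (Suc n) (\<lambda>i j. bcoef \<eta> (Suc i) * c (Suc i) j)"
    unfolding d_action_def by (simp add: uw_sum_add uw_sum_diff)
  have scaled_bounded: "bounded_by n (\<lambda>i j. \<eta> ^ j * c i j)"
    using assms unfolding bounded_by_def by auto
  have a0: "acoef \<eta> 0 = 0" and b0: "bcoef \<eta> 0 = 0"
    by (simp_all add: acoef_def bcoef_def)
  have "uw_sum w (Suc n) (d_action \<eta> c) = (\<Sum>i<n. \<Sum>j<n. scal (c i j) * T i j)"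
    unfolding action_split T_expanded uw_sum_enlarge[OF scaled_bounded, of "Suc n", simplified]
    unfolding uw_sum_def reindex_raised_terms[where a = "acoef \<eta>", OF assms a0]
      reindex_lowered_terms[where b = "bcoef \<eta>", OF assms b0] ..
  then show ?thesis using congruent by simp
qed

definition uw_spanned :: "'k free2 \<Rightarrow> bool" where
  "uw_spanned x \<longleftrightarrow> (\<exists>n c. bounded_by n c \<and> x - uw_sum w n c \<in> NK)"

lemma uw_spanned_add:
  assumes "uw_spanned x" "uw_spanned y"
  shows "uw_spanned (x + y)"
proof -
  obtain n c n' c' where x: "bounded_by n c" "x - uw_sum w n c \<in> NK"
    and y: "bounded_by n' c'" "y - uw_sum w n' c' \<in> NK"
    using assms unfolding uw_spanned_def by blast
  define m where "m = max n n'"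
  have enlarged: "uw_sum w m c = uw_sum w n c" "uw_sum w m c' = uw_sum w n' c'"
    by (rule uw_sum_enlarge[OF x(1)], simp add: m_def) (rule uw_sum_enlarge[OF y(1)], simp add: m_def)
  have "bounded_by m c" "bounded_by m c'"
    using bounded_by_mono[OF x(1)] bounded_by_mono[OF y(1)] m_def by auto
  then have "bounded_by m (\<lambda>i j. c i j + c' i j)"
    unfolding bounded_by_def by auto
  moreover have "x + y - uw_sum w m (\<lambda>i j. c i j + c' i j) = (x - uw_sum w n c) + (y - uw_sum w n' c')"
    unfolding uw_sum_add enlarged by simp
  ultimately show ?thesis
    unfolding uw_spanned_def using x(2) y(2) li_add[OF NK_left_ideal] by metis
qed

lemma uw_spanned_scal:
  assumes "uw_spanned x"
  shows "uw_spanned (scal k * x)"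
proof -
  obtain n c where x: "bounded_by n c" "x - uw_sum w n c \<in> NK"
    using assms unfolding uw_spanned_def by blast
  have "bounded_by n (\<lambda>i j. k * c i j)"
    using x(1) unfolding bounded_by_def by auto
  moreover have "scal k * x - uw_sum w n (\<lambda>i j. k * c i j) = scal k * (x - uw_sum w n c)"
    unfolding uw_sum_scal by (simp add: right_diff_distrib)
  ultimately show ?thesis
    unfolding uw_spanned_def using x(2) li_lmult[OF NK_left_ideal] by metis
qed

lemma uw_spanned_d:
  assumes "uw_spanned x"
  shows "uw_spanned (gen_d * x)"
proof -
  obtain n c where x: "bounded_by n c" "x - uw_sum w n c \<in> NK"
    using assms unfolding uw_spanned_def by blast
  have "gen_d * x - uw_sum w (Suc n) (d_action \<eta> c)
      = gen_d * (x - uw_sum w n c) + (gen_d * uw_sum w n c - uw_sum w (Suc n) (d_action \<eta> c))"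
    by (simp add: algebra_simps)
  also have "\<dots> \<in> NK"
    by (rule li_add[OF NK_left_ideal li_lmult[OF NK_left_ideal x(2)] d_times_uw_sum[OF x(1)]])
  finally show ?thesis
    unfolding uw_spanned_def using d_action_bounded[OF x(1)] by blast
qed

lemma uw_spanned_u:
  assumes "uw_spanned x"
  shows "uw_spanned (gen_u * x)"
proof -
  obtain n c where x: "bounded_by n c" "x - uw_sum w n c \<in> NK"
    using assms unfolding uw_spanned_def by blast
  define c' where "c' i j = (if i = 0 then 0 else c (i - 1) j)" for i j
  have "bounded_by (Suc n) c'"
    using x(1) unfolding bounded_by_def c'_def by auto
  moreover have "gen_u * x - uw_sum w (Suc n) c' = gen_u * (x - uw_sum w n c)"
    unfolding c'_def u_times_uw_sum[OF x(1), symmetric] by (simp add: right_diff_distrib)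
  ultimately show ?thesis
    unfolding uw_spanned_def using x(2) li_lmult[OF NK_left_ideal] by metis
qed

lemma uw_spanned_1: "uw_spanned 1"
proof -
  define c :: "'k coeffs" where "c i j = (if i = 0 \<and> j = 0 then 1 else 0)" for i j
  have "bounded_by 1 c" unfolding bounded_by_def c_def by auto
  moreover have "uw_sum w 1 c = 1" unfolding uw_sum_def c_def by simp
  ultimately show ?thesis
    unfolding uw_spanned_def using li_0[OF NK_left_ideal] by force
qed

lemma uw_spanned_monomial: "uw_spanned (Poly_Mapping.single (Abs_word l) k)"
proof (induction l)
  case Nil
  then show ?case using uw_spanned_scal[OF uw_spanned_1, of k] by (simp add: single_word_Nil)
next
  case (Cons a l)
  then show ?case
    using uw_spanned_d[OF Cons] uw_spanned_u[OF Cons] single_word_Cons[of a l k]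
    by (cases a) (simp_all add: gen_d_def gen_u_def)
qed

theorem uw_spanned_all: "uw_spanned x"
proof (induction x rule: update_induct)
  case const
  show ?case using uw_spanned_scal[OF uw_spanned_1, of 0] by simp
next
  case (update f a b)
  have "uw_spanned (Poly_Mapping.single a b)"
    using uw_spanned_monomial[of "Rep_word a" b] by (simp add: Rep_word_inverse)
  then show ?case using update by (simp add: update_eq_add uw_spanned_add)
qed

lemma d_minus_eta_power_times_uw_sum:
  assumes "bounded_by n c"
  shows "(gen_d - scal (\<eta> ^ k)) * uw_sum w n c - uw_sum w (Suc n) (shifted_d_action \<eta> k c) \<in> NK"
proof -
  have "uw_sum w (Suc n) (shifted_d_action \<eta> k c)
      = uw_sum w (Suc n) (d_action \<eta> c) - scal (\<eta> ^ k) * uw_sum w (Suc n) c"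
    unfolding shifted_d_action_def uw_sum_diff uw_sum_scal ..
  also have "uw_sum w (Suc n) c = uw_sum w n c"
    by (rule uw_sum_enlarge[OF assms]) simp
  finally have "(gen_d - scal (\<eta> ^ k)) * uw_sum w n c - uw_sum w (Suc n) (shifted_d_action \<eta> k c)
      = gen_d * uw_sum w n c - uw_sum w (Suc n) (d_action \<eta> c)"
    by (simp add: algebra_simps)
  then show ?thesis using d_times_uw_sum[OF assms] by simp
qed

lemma reaches_w_power_shifted:
  assumes "bounded_by n c" "reaches_w_power \<eta> (Suc n) (shifted_d_action \<eta> k c)"
  shows "reaches_w_power \<eta> n c"
proof -
  let ?c' = "shifted_d_action \<eta> k c"
  obtain a m where am: "a * uw_sum w (Suc n) ?c' - w ^ m \<in> NK"
    using assms(2) unfolding reaches_w_power_def by blast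
  have "(a * (gen_d - scal (\<eta> ^ k))) * uw_sum w n c - w ^ m
      = a * ((gen_d - scal (\<eta> ^ k)) * uw_sum w n c - uw_sum w (Suc n) ?c')
        + (a * uw_sum w (Suc n) ?c' - w ^ m)"
    by (simp add: algebra_simps)
  also have "\<dots> \<in> NK"
    by (rule li_add[OF NK_left_ideal li_lmult[OF NK_left_ideal d_minus_eta_power_times_uw_sum[OF assms(1)]] am])
  finally show ?thesis unfolding reaches_w_power_def by blast
qed

lemma reaches_w_power_row0_single:
  assumes "bounded_by n c" "rows_vanish_above 0 c" "{j. c 0 j \<noteq> 0} = {k}"
  shows "reaches_w_power \<eta> n c"
proof -
  have upper_rows: "c i j = 0" if "i \<noteq> 0" for i j
    using assms(2) that unfolding rows_vanish_above_def by simp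
  have other_columns: "c 0 j = 0" if "j \<noteq> k" for j
    using assms(3) that by blast
  have nonzero: "c 0 k \<noteq> 0" using assms(3) by auto
  then have "k < n" "0 < n"
    using assms(1) unfolding bounded_by_def by (meson not_le)+
  have "uw_sum w n c = (\<Sum>j<n. scal (c 0 j) * w ^ j)"
    unfolding uw_sum_def by (subst sum.remove[of _ 0]) (use \<open>0 < n\<close> upper_rows in auto)
  also have "\<dots> = scal (c 0 k) * w ^ k"
    by (subst sum.remove[of _ k]) (use \<open>k < n\<close> other_columns in auto)
  finally have "uw_sum w n c = scal (c 0 k) * w ^ k" .
  then have "scal (inverse (c 0 k)) * uw_sum w n c - w ^ k = 0"
    using nonzero by (simp add: scal_mult_assoc)
  then show ?thesis
    unfolding reaches_w_power_def using li_0[OF NK_left_ideal] by metis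
qed

end
section \<open>Elimination: every nonzero array reaches a power of \<open>w\<close>\<close>

context
  fixes \<eta> :: "'k::field_char_0"
  assumes eta_nz: "\<eta> \<noteq> 0"
    and eta_nroot: "\<forall>n::nat. n > 0 \<longrightarrow> \<eta> ^ n \<noteq> 1"
begin

lemma eta_ne1: "\<eta> \<noteq> 1"
  using eta_nroot[rule_format, of 1] by simp

lemma eta_power_inj:
  assumes "\<eta> ^ j = \<eta> ^ k"
  shows "j = k"
proof (rule ccontr)
  have root: "\<eta> ^ (b - a) = 1" if "\<eta> ^ a = \<eta> ^ b" "a < b" for a b
  proof -
    have "\<eta> ^ b = \<eta> ^ a * \<eta> ^ (b - a)"
      using that(2) by (simp add: power_add[symmetric])
    then show ?thesis using that(1) eta_nz by simp
  qed
  assume "j \<noteq> k"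
  then have "\<eta> ^ (k - j) = 1 \<and> j < k \<or> \<eta> ^ (j - k) = 1 \<and> k < j"
    using root[of j k] root[of k j] assms by (cases "j < k") auto
  then show False using eta_nroot by auto
qed

text \<open>Here the characteristic \<open>0\<close> is used.\<close>
lemma bcoef_nonzero: "0 < i \<Longrightarrow> bcoef \<eta> i \<noteq> 0"
  unfolding bcoef_def using eta_ne1 by simp

text \<open>Reduction of the top row: it suffices to treat arrays whose top nonzero row has a
  single entry.  Otherwise pick a second entry in column \<open>k\<close> and apply the elimination
  step for \<open>k\<close>, which lowers the number of entries in the top row but keeps the others.\<close>
lemma reduce_top_row:
  assumes single: "\<And>n c k. bounded_by n c \<Longrightarrow> rows_vanish_above I c \<Longrightarrow> {j. c I j \<noteq> 0} = {k}
      \<Longrightarrow> reaches_w_power \<eta> n c"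
  shows "bounded_by n c \<Longrightarrow> rows_vanish_above I c \<Longrightarrow> c I j \<noteq> 0 \<Longrightarrow> reaches_w_power \<eta> n c"
proof (induction "card {j. c I j \<noteq> 0}" arbitrary: n c j rule: less_induct)
  case less
  define S where "S = {j. c I j \<noteq> 0}"
  have "finite S" unfolding S_def by (rule bounded_by_row_finite[OF less.prems(1)])
  have "j \<in> S" unfolding S_def using less.prems(3) by simp
  show ?case
  proof (cases "S = {j}")
    case True
    then show ?thesis using single[OF less.prems(1,2)] S_def by blast
  next
    case False
    then obtain k where k: "k \<in> S" "k \<noteq> j" using \<open>j \<in> S\<close> by blast
    define c' where "c' = shifted_d_action \<eta> k c"
    have "{x. c' I x \<noteq> 0} = S - {k}"
      unfolding c'_def shifted_d_action_top_row[OF less.prems(2)] S_def using eta_power_inj by auto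
    moreover have "card (S - {k}) < card S"
      using \<open>finite S\<close> k(1) by (meson card_Diff1_less)
    ultimately have "reaches_w_power \<eta> (Suc n) c'"
      using less.hyps[of c' "Suc n" j] \<open>j \<in> S\<close> k(2) S_def
        shifted_d_action_bounded[OF less.prems(1)] shifted_d_action_rows_vanish[OF less.prems(2)]
      unfolding c'_def by auto
    then show ?thesis
      using reaches_w_power_shifted[OF eta_ne1 less.prems(1)] c'_def by simp
  qed
qed

lemma clear_single_top_row:
  assumes top: "rows_vanish_above (Suc I) c" and single: "{j. c (Suc I) j \<noteq> 0} = {k}"
  shows "rows_vanish_above I (shifted_d_action \<eta> k c)" "shifted_d_action \<eta> k c I k \<noteq> 0"
proof -
  have only_k: "\<forall>j. c (Suc I) j \<noteq> 0 \<longrightarrow> j = k" using single by auto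
  show "rows_vanish_above I (shifted_d_action \<eta> k c)"
    unfolding rows_vanish_above_def
  proof (intro allI impI)
    fix i j assume "I < i"
    then consider "i = Suc I" | "Suc I < i" by linarith
    then show "shifted_d_action \<eta> k c i j = 0"
    proof cases
      case 1
      then show ?thesis using shifted_d_action_top_row[OF top, of \<eta> k j] only_k by auto
    next
      case 2
      then show ?thesis using shifted_d_action_rows_vanish[OF top] unfolding rows_vanish_above_def by auto
    qed
  qed
  show "shifted_d_action \<eta> k c I k \<noteq> 0"
    using shifted_d_action_below_top[OF top only_k] bcoef_nonzero[of "Suc I"] single by auto
qed

lemma reaches_w_power_top_row:
  "bounded_by n c \<Longrightarrow> rows_vanish_above I c \<Longrightarrow> c I j \<noteq> 0 \<Longrightarrow> reaches_w_power \<eta> n c"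
proof (induction I arbitrary: n c j)
  case 0
  show ?case
    by (rule reduce_top_row[OF _ 0]) (rule reaches_w_power_row0_single[OF eta_ne1])
next
  case (Suc I)
  show ?case
  proof (rule reduce_top_row[OF _ Suc.prems])
    fix n and c :: "'k coeffs" and k
    assume bounded: "bounded_by n c" and top: "rows_vanish_above (Suc I) c"
      and single: "{j. c (Suc I) j \<noteq> 0} = {k}"
    have "reaches_w_power \<eta> (Suc n) (shifted_d_action \<eta> k c)"
      using Suc.IH shifted_d_action_bounded[OF bounded] clear_single_top_row[OF top single] by blast
    then show "reaches_w_power \<eta> n c"
      using reaches_w_power_shifted[OF eta_ne1 bounded] by simp
  qed
qed

theorem reaches_w_power_nonzero:
  assumes bounded: "bounded_by n c" and nonzero: "c i j \<noteq> 0"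
  shows "reaches_w_power \<eta> n c"
proof -
  define R where "R = {i. \<exists>j. c i j \<noteq> 0}"
  have "finite R"
    unfolding R_def
    by (rule finite_subset[of _ "{..<n}"]) (use bounded in \<open>auto simp: bounded_by_def not_le[symmetric]\<close>)
  moreover have "i \<in> R" unfolding R_def using nonzero by blast
  ultimately have "Max R \<in> R" by (auto intro: Max_in)
  have top: "rows_vanish_above (Max R) c"
    unfolding rows_vanish_above_def
  proof (intro allI impI)
    fix i' j' assume "Max R < i'"
    then have "i' \<notin> R" using \<open>finite R\<close> Max_ge leD by blast
    then show "c i' j' = 0" unfolding R_def by blast
  qed
  obtain j' where "c (Max R) j' \<noteq> 0" using \<open>Max R \<in> R\<close> unfolding R_def by blast
  then show ?thesis by (rule reaches_w_power_top_row[OF bounded top])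
qed

end

theorem lemma4p4:
  fixes \<eta> :: "'k::field_char_0"
    and L :: "'k free2 set"
  assumes eta_nz: "\<eta> \<noteq> 0"
    and eta_nroot: "\<forall>n::nat. n > 0 \<longrightarrow> \<eta> ^ n \<noteq> 1"
    and L_left: "left_ideal L"
    and L_sup: "N_kernel (1 + \<eta>) (- \<eta>) 1 \<subseteq> L"
    and L_nonzero: "L \<noteq> N_kernel (1 + \<eta>) (- \<eta>) 1"
  shows "\<exists>m::nat. (- (gen_u * gen_d) + gen_d * gen_u + scal (inverse (\<eta> - 1))) ^ m \<in> L"
proof -
  let ?NK = "N_kernel (1 + \<eta>) (- \<eta>) 1" and ?w = "w_elem \<eta>"
  have eta_ne1: "\<eta> \<noteq> 1" by (rule eta_ne1[OF eta_nz eta_nroot])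
  obtain f where f: "f \<in> L" "f \<notin> ?NK" using L_sup L_nonzero by blast
  obtain n c where c: "bounded_by n c" "f - uw_sum ?w n c \<in> ?NK"
    using uw_spanned_all[OF eta_ne1, of f] unfolding uw_spanned_def[OF eta_ne1] by blast
  have "\<exists>i j. c i j \<noteq> 0"
  proof (rule ccontr)
    assume "\<not> ?thesis"
    then have "uw_sum ?w n c = 0" unfolding uw_sum_def by simp
    then show False using c(2) f(2) by simp
  qed
  then obtain a m where am: "a * uw_sum ?w n c - ?w ^ m \<in> ?NK"
    using reaches_w_power_nonzero[OF eta_nz eta_nroot c(1)] unfolding reaches_w_power_def by blast
  have "uw_sum ?w n c \<in> L" by (rule li_congruent[OF L_left L_sup f(1) c(2)])
  then have "?w ^ m \<in> L" by (rule li_congruent[OF L_left L_sup li_lmult[OF L_left] am])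
  then show ?thesis unfolding w_elem_def by blast
qed

end
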